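(* Let $G$ be a finite group and $t$ a positive integer. Then $$e(G)\le t+\mu^*(G,t)+\sum_{p\in\pi(G)}\mu_p(G,t).$$
   Context: $e(G)$ is the expected number of uniformly random elements of $G$, drawn independently with replacement, needed until they generate $G$; equivalently $e(G)=\sum_{n\ge0}(1-P_G(n))$ with $P_G(n)$ the probability that $n$ random elements generate $G$. $\pi(G)$ is the set of primes dividing $|G|$. A maximal subgroup $M$ of $G$ is of type A if the socle of $G/\mathrm{core}_G(M)$ is abelian and of type B otherwise; $m_n^A(G)$ (resp. $m_n^B(G)$) is the number of maximal subgroups of $G$ of type A (resp. B) of index $n$. Define $\mu^*(G,t)=\sum_{k\ge t}\sum_{n\ge 5} m_n^B(G)/n^k$ and, for a prime $p$, $\mu_p(G,t)=\sum_{k\ge t}\sum_{n\ge1} m^A_{p^n}(G)/p^{nk}$. *)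

theory Defs
  imports "HOL-Algebra.Algebra" "HOL-Analysis.Analysis"
begin

definition gen_prob :: "('a, 'b) monoid_scheme \<Rightarrow> nat \<Rightarrow> real" where
  "gen_prob G n =
     real (card {f \<in> {..<n} \<rightarrow>\<^sub>E carrier G. generate G (f ` {..<n}) = carrier G})
     / real (card (carrier G)) ^ n"

definition expected_gen :: "('a, 'b) monoid_scheme \<Rightarrow> real" where
  "expected_gen G = suminf (\<lambda>n. 1 - gen_prob G n)"

definition maximal_subgroup :: "('a, 'b) monoid_scheme \<Rightarrow> 'a set \<Rightarrow> bool" where
  "maximal_subgroup G M \<longleftrightarrow> subgroup M G \<and> M \<noteq> carrier G \<and>
     (\<forall>H. subgroup H G \<and> M \<subseteq> H \<longrightarrow> H = M \<or> H = carrier G)"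

definition core :: "('a, 'b) monoid_scheme \<Rightarrow> 'a set \<Rightarrow> 'a set" where
  "core G M = (\<Inter>g\<in>carrier G. (g <#\<^bsub>G\<^esub> M) #>\<^bsub>G\<^esub> inv\<^bsub>G\<^esub> g)"

definition minimal_normal :: "('a, 'b) monoid_scheme \<Rightarrow> 'a set \<Rightarrow> bool" where
  "minimal_normal G N \<longleftrightarrow> N \<lhd> G \<and> N \<noteq> {\<one>\<^bsub>G\<^esub>} \<and>
     (\<forall>K. K \<lhd> G \<and> K \<subseteq> N \<longrightarrow> K = {\<one>\<^bsub>G\<^esub>} \<or> K = N)"

definition socle :: "('a, 'b) monoid_scheme \<Rightarrow> 'a set" where
  "socle G = generate G (\<Union>{N. minimal_normal G N})"

definition abelian_socle :: "('a, 'b) monoid_scheme \<Rightarrow> bool" where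
  "abelian_socle G \<longleftrightarrow> (\<forall>x\<in>socle G. \<forall>y\<in>socle G. x \<otimes>\<^bsub>G\<^esub> y = y \<otimes>\<^bsub>G\<^esub> x)"

definition typeA :: "('a, 'b) monoid_scheme \<Rightarrow> 'a set \<Rightarrow> bool" where
  "typeA G M \<longleftrightarrow> maximal_subgroup G M \<and> abelian_socle (G Mod (core G M))"

definition typeB :: "('a, 'b) monoid_scheme \<Rightarrow> 'a set \<Rightarrow> bool" where
  "typeB G M \<longleftrightarrow> maximal_subgroup G M \<and> \<not> abelian_socle (G Mod (core G M))"

definition mA :: "('a, 'b) monoid_scheme \<Rightarrow> nat \<Rightarrow> nat" where
  "mA G n = card {M. typeA G M \<and> card (rcosets\<^bsub>G\<^esub> M) = n}"

definition mB :: "('a, 'b) monoid_scheme \<Rightarrow> nat \<Rightarrow> nat" where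
  "mB G n = card {M. typeB G M \<and> card (rcosets\<^bsub>G\<^esub> M) = n}"

text \<open>mu*(G,t) = sum_{k>=t} sum_{n>=5} mB_n / n^k. Indices of subgroups are at most |G|,
  so the inner sum is the finite sum over 5 <= n <= |G|.\<close>
definition mu_star :: "('a, 'b) monoid_scheme \<Rightarrow> nat \<Rightarrow> real" where
  "mu_star G t = suminf (\<lambda>k. \<Sum>n\<in>{5..card (carrier G)}. real (mB G n) / real n ^ (k + t))"

text \<open>mu_p(G,t) = sum_{k>=t} sum_{n>=1} mA_{p^n} / p^{nk}; p^n \<le> |G| forces n \<le> |G|.\<close>
definition mu_p :: "('a, 'b) monoid_scheme \<Rightarrow> nat \<Rightarrow> nat \<Rightarrow> real" where
  "mu_p G p t = suminf (\<lambda>k. \<Sum>n\<in>{1..card (carrier G)}. real (mA G (p ^ n)) / real p ^ (n * (k + t)))"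

definition prime_divisors_order :: "('a, 'b) monoid_scheme \<Rightarrow> nat set" where
  "prime_divisors_order G = {p. Factorial_Ring.prime p \<and> p dvd card (carrier G)}"

end

theory Submission
  imports Defs
begin

text \<open>Since \<open>1 - P\<^sub>G(n)\<close> is the probability that \<open>n\<close> random elements lie in a common maximal
  subgroup, \<open>1 - P\<^sub>G(n) \<le> \<Sum>\<^sub>M |G:M|\<^sup>-\<^sup>n\<close>; for \<open>n < t\<close> we use \<open>1 - P\<^sub>G(n) \<le> 1\<close> instead.
  A maximal subgroup \<open>M\<close> of type A has prime-power index \<open>p\<^sup>a\<close> with \<open>p\<close> dividing \<open>|G|\<close>:
  for a minimal normal subgroup \<open>N\<close> of \<open>G/core M\<close>, which is abelian and hence elementary
  abelian, one has \<open>|G:M| = |N|\<close>. A maximal subgroup of index at most 4 is of type A, because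
  \<open>G/core M\<close> then embeds into the solvable group \<open>S\<^sub>4\<close>, whose minimal normal subgroups are
  abelian. Grouping the maximal subgroups by type and index gives the bound.\<close>

section \<open>Commutators and minimal normal subgroups\<close>

context group
begin

lemma inv_mult_cancel_left [simp]:
  "x \<in> carrier G \<Longrightarrow> y \<in> carrier G \<Longrightarrow> inv x \<otimes> (x \<otimes> y) = y"
  by (simp add: m_assoc[symmetric])

lemma mult_inv_cancel_left [simp]:
  "x \<in> carrier G \<Longrightarrow> y \<in> carrier G \<Longrightarrow> x \<otimes> (inv x \<otimes> y) = y"
  by (simp add: m_assoc[symmetric])

lemma commute_if_commutator_eq_one:
  assumes "x \<in> carrier G" "y \<in> carrier G" "x \<otimes> y \<otimes> inv x \<otimes> inv y = \<one>"
  shows "x \<otimes> y = y \<otimes> x"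
proof -
  have "x \<otimes> y = (x \<otimes> y \<otimes> inv x \<otimes> inv y) \<otimes> (y \<otimes> x)"
    using assms(1,2) by (simp add: m_assoc)
  then show ?thesis using assms by simp
qed

lemma commutator_eq_one_if_commute:
  assumes "x \<in> carrier G" "y \<in> carrier G" "x \<otimes> y = y \<otimes> x"
  shows "x \<otimes> y \<otimes> inv x \<otimes> inv y = \<one>"
  using assms by (simp add: m_assoc)

lemma commutator_mem_normal_left:
  assumes "N \<lhd> G" "x \<in> N" "y \<in> carrier G"
  shows "x \<otimes> y \<otimes> inv x \<otimes> inv y \<in> N"
proof -
  interpret normal N G by (fact assms(1))
  have x: "x \<in> carrier G" using assms(2) subset by blast
  have "y \<otimes> inv x \<otimes> inv y \<in> N"
    using assms(1) assms(3) m_inv_closed[OF assms(2)] normal_inv_iff by blast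
  then have "x \<otimes> (y \<otimes> inv x \<otimes> inv y) \<in> N" using assms(2) m_closed by blast
  then show ?thesis using x assms(3) by (simp add: m_assoc)
qed

lemma commutator_mem_normal_right:
  assumes "N \<lhd> G" "x \<in> carrier G" "y \<in> N"
  shows "x \<otimes> y \<otimes> inv x \<otimes> inv y \<in> N"
proof -
  interpret normal N G by (fact assms(1))
  have "x \<otimes> y \<otimes> inv x \<in> N" using assms normal_inv_iff by blast
  then show ?thesis using assms(3) by simp
qed

lemma commute_generate:
  assumes A: "A \<subseteq> carrier G" and a: "a \<in> carrier G" and comm: "\<forall>y\<in>A. a \<otimes> y = y \<otimes> a"
  shows "y \<in> generate G A \<Longrightarrow> a \<otimes> y = y \<otimes> a"
proof (induction y rule: generate.induct)
  case one then show ?case using a by simp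
next
  case (incl h) then show ?case using comm by blast
next
  case (inv h)
  then have h: "h \<in> carrier G" and "a \<otimes> h = h \<otimes> a" using A comm by auto
  then have "inv h \<otimes> (a \<otimes> h) \<otimes> inv h = inv h \<otimes> (h \<otimes> a) \<otimes> inv h" by simp
  then show ?case using h a by (simp add: m_assoc)
next
  case (eng h1 h2)
  have h1: "h1 \<in> carrier G" and h2: "h2 \<in> carrier G"
    using eng.hyps generate_incl[OF A] by blast+
  have "a \<otimes> (h1 \<otimes> h2) = (a \<otimes> h1) \<otimes> h2" using a h1 h2 by (simp add: m_assoc)
  also have "\<dots> = h1 \<otimes> (a \<otimes> h2)" using a h1 h2 eng.IH(1) by (simp add: m_assoc)
  also have "\<dots> = h1 \<otimes> h2 \<otimes> a" using a h1 h2 eng.IH(2) by (simp add: m_assoc)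
  finally show ?case .
qed

lemma generate_commutative:
  assumes A: "A \<subseteq> carrier G" and comm: "\<forall>x\<in>A. \<forall>y\<in>A. x \<otimes> y = y \<otimes> x"
    and x: "x \<in> generate G A" and y: "y \<in> generate G A"
  shows "x \<otimes> y = y \<otimes> x"
proof -
  have "x \<in> carrier G" using x generate_incl[OF A] by blast
  moreover have "\<forall>a\<in>A. x \<otimes> a = a \<otimes> x"
    using commute_generate[OF A _ _ x] A comm by (metis subsetD)
  ultimately show ?thesis using commute_generate[OF A _ _ y] by blast
qed

lemma minimal_normalD:
  assumes "minimal_normal G N"
  shows "N \<lhd> G" "subgroup N G" "N \<subseteq> carrier G" "N \<noteq> {\<one>}"
    "\<And>K. K \<lhd> G \<Longrightarrow> K \<subseteq> N \<Longrightarrow> K = {\<one>} \<or> K = N"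
proof -
  show N: "N \<lhd> G" "N \<noteq> {\<one>}" "\<And>K. K \<lhd> G \<Longrightarrow> K \<subseteq> N \<Longrightarrow> K = {\<one>} \<or> K = N"
    using assms unfolding minimal_normal_def by auto
  show "subgroup N G" using N(1) by (rule normal_imp_subgroup)
  then show "N \<subseteq> carrier G" by (rule subgroup.subset)
qed

lemma minimal_normal_commutative_or_subset:
  assumes N: "minimal_normal G N" and L: "L \<lhd> G"
    and comm: "\<forall>x\<in>N. \<forall>y\<in>N. x \<otimes> y \<otimes> inv x \<otimes> inv y \<in> L"
  shows "(\<forall>x\<in>N. \<forall>y\<in>N. x \<otimes> y = y \<otimes> x) \<or> N \<subseteq> L"
proof -
  note ND = minimal_normalD[OF N]
  have "N \<inter> L = {\<one>} \<or> N \<inter> L = N"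
    using ND(5)[OF normal_subgroup_intersect[OF ND(1) L]] by blast
  moreover have "x \<otimes> y = y \<otimes> x" if trivial: "N \<inter> L = {\<one>}" and xy: "x \<in> N" "y \<in> N" for x y
  proof (rule commute_if_commutator_eq_one)
    show x: "x \<in> carrier G" and y: "y \<in> carrier G" using xy ND(3) by auto
    have "x \<otimes> y \<otimes> inv x \<otimes> inv y \<in> N" by (rule commutator_mem_normal_left[OF ND(1) xy(1) y])
    moreover have "x \<otimes> y \<otimes> inv x \<otimes> inv y \<in> L" using comm xy by blast
    ultimately show "x \<otimes> y \<otimes> inv x \<otimes> inv y = \<one>" using trivial by blast
  qed
  ultimately show ?thesis by blast
qed

lemma minimal_normals_commute:
  assumes N1: "minimal_normal G N1" and N2: "minimal_normal G N2"
    and comm: "\<And>N. minimal_normal G N \<Longrightarrow> \<forall>x\<in>N. \<forall>y\<in>N. x \<otimes> y = y \<otimes> x"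
    and x: "x \<in> N1" and y: "y \<in> N2"
  shows "x \<otimes> y = y \<otimes> x"
proof (cases "N1 = N2")
  case True then show ?thesis using comm[OF N1] x y by blast
next
  case False
  note D1 = minimal_normalD[OF N1] and D2 = minimal_normalD[OF N2]
  have "N1 \<inter> N2 \<lhd> G" by (rule normal_subgroup_intersect[OF D1(1) D2(1)])
  then have "N1 \<inter> N2 = {\<one>}" using D1(5) D2(5) False by blast
  show ?thesis
  proof (rule commute_if_commutator_eq_one)
    show xc: "x \<in> carrier G" and yc: "y \<in> carrier G" using x y D1(3) D2(3) by auto
    have "x \<otimes> y \<otimes> inv x \<otimes> inv y \<in> N1" by (rule commutator_mem_normal_left[OF D1(1) x yc])
    moreover have "x \<otimes> y \<otimes> inv x \<otimes> inv y \<in> N2" by (rule commutator_mem_normal_right[OF D2(1) xc y])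
    ultimately show "x \<otimes> y \<otimes> inv x \<otimes> inv y = \<one>" using \<open>N1 \<inter> N2 = {\<one>}\<close> by blast
  qed
qed

lemma abelian_socleI:
  assumes comm: "\<And>N. minimal_normal G N \<Longrightarrow> \<forall>x\<in>N. \<forall>y\<in>N. x \<otimes> y = y \<otimes> x"
  shows "abelian_socle G"
  unfolding abelian_socle_def socle_def
proof (intro ballI, rule generate_commutative)
  show "\<Union>{N. minimal_normal G N} \<subseteq> carrier G" using minimal_normalD(3) by blast
  show "\<forall>x\<in>\<Union>{N. minimal_normal G N}. \<forall>y\<in>\<Union>{N. minimal_normal G N}. x \<otimes> y = y \<otimes> x"
  proof (intro ballI)
    fix x y assume "x \<in> \<Union>{N. minimal_normal G N}" "y \<in> \<Union>{N. minimal_normal G N}"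
    then obtain N1 N2 where N: "minimal_normal G N1" "minimal_normal G N2" "x \<in> N1" "y \<in> N2"
      by blast
    show "x \<otimes> y = y \<otimes> x" by (rule minimal_normals_commute[OF N(1,2) comm N(3,4)])
  qed
qed

lemma abelian_socle_minimal_normal:
  assumes "abelian_socle G" "minimal_normal G N" "x \<in> N" "y \<in> N"
  shows "x \<otimes> y = y \<otimes> x"
proof -
  have "N \<subseteq> socle G" unfolding socle_def using assms(2) by (blast intro: generate.incl)
  then show ?thesis using assms(1,3,4) unfolding abelian_socle_def by blast
qed

end

lemma (in group_hom) normal_vimage:
  assumes "N \<lhd> H"
  shows "{x \<in> carrier G. h x \<in> N} \<lhd> G"
proof -
  interpret N: normal N H by (fact assms)
  have sub: "subgroup {x \<in> carrier G. h x \<in> N} G"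
  proof (rule G.subgroupI)
    fix a b assume "a \<in> {x \<in> carrier G. h x \<in> N}" "b \<in> {x \<in> carrier G. h x \<in> N}"
    then show "inv a \<in> {x \<in> carrier G. h x \<in> N}" "a \<otimes> b \<in> {x \<in> carrier G. h x \<in> N}"
      by (simp_all add: hom_inv hom_mult N.m_inv_closed N.m_closed)
  qed (use N.one_closed in auto)
  show ?thesis
  proof (rule G.normal_inv_iff[THEN iffD2, OF conjI[OF sub]], intro ballI)
    fix g y assume "g \<in> carrier G" "y \<in> {x \<in> carrier G. h x \<in> N}"
    then show "g \<otimes> y \<otimes> inv g \<in> {x \<in> carrier G. h x \<in> N}"
      using assms H.normal_inv_iff by (simp add: hom_inv hom_mult)
  qed
qed

lemma (in group_hom) abelian_socle_if_inj_hom_derived_length_3: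
  assumes inj: "inj_on h (carrier G)" and A: "A \<lhd> H" and V: "V \<lhd> H"
    and HA: "\<forall>x\<in>carrier H. \<forall>y\<in>carrier H. x \<otimes>\<^bsub>H\<^esub> y \<otimes>\<^bsub>H\<^esub> inv\<^bsub>H\<^esub> x \<otimes>\<^bsub>H\<^esub> inv\<^bsub>H\<^esub> y \<in> A"
    and AV: "\<forall>x\<in>A. \<forall>y\<in>A. x \<otimes>\<^bsub>H\<^esub> y \<otimes>\<^bsub>H\<^esub> inv\<^bsub>H\<^esub> x \<otimes>\<^bsub>H\<^esub> inv\<^bsub>H\<^esub> y \<in> V"
    and VV: "\<forall>x\<in>V. \<forall>y\<in>V. x \<otimes>\<^bsub>H\<^esub> y = y \<otimes>\<^bsub>H\<^esub> x"
  shows "abelian_socle G"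
proof (rule G.abelian_socleI)
  fix N assume N: "minimal_normal G N"
  note ND = G.minimal_normalD[OF N]
  have h_comm: "h (x \<otimes> y \<otimes> inv x \<otimes> inv y) = h x \<otimes>\<^bsub>H\<^esub> h y \<otimes>\<^bsub>H\<^esub> inv\<^bsub>H\<^esub> h x \<otimes>\<^bsub>H\<^esub> inv\<^bsub>H\<^esub> h y"
    if "x \<in> N" "y \<in> N" for x y
  proof -
    have "x \<in> carrier G" "y \<in> carrier G" using that ND(3) by auto
    then show ?thesis by (simp add: hom_mult hom_inv)
  qed
  txt \<open>A non-abelian \<open>N\<close> would lie in the preimage of \<open>A\<close>, hence in that of \<open>V\<close>, where
    commutators are trivial.\<close>
  show "\<forall>x\<in>N. \<forall>y\<in>N. x \<otimes> y = y \<otimes> x"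
  proof (rule ccontr)
    assume noncomm: "\<not> (\<forall>x\<in>N. \<forall>y\<in>N. x \<otimes> y = y \<otimes> x)"
    have "\<forall>x\<in>N. \<forall>y\<in>N. x \<otimes> y \<otimes> inv x \<otimes> inv y \<in> {x \<in> carrier G. h x \<in> A}"
      using HA h_comm ND(3) by (simp add: subset_iff)
    then have NA: "N \<subseteq> {x \<in> carrier G. h x \<in> A}"
      using G.minimal_normal_commutative_or_subset[OF N normal_vimage[OF A]] noncomm by blast
    have "\<forall>x\<in>N. \<forall>y\<in>N. x \<otimes> y \<otimes> inv x \<otimes> inv y \<in> {x \<in> carrier G. h x \<in> V}"
      using AV h_comm NA by (simp add: subset_iff)
    then have NV: "N \<subseteq> {x \<in> carrier G. h x \<in> V}"
      using G.minimal_normal_commutative_or_subset[OF N normal_vimage[OF V]] noncomm by blast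
    have "x \<otimes> y = y \<otimes> x" if "x \<in> N" "y \<in> N" for x y
    proof -
      have x: "x \<in> carrier G" and y: "y \<in> carrier G" using that ND(3) by auto
      have "h (x \<otimes> y) = h (y \<otimes> x)" using that NV VV x y by (auto simp: hom_mult)
      then show ?thesis using inj x y by (simp add: inj_on_def)
    qed
    then show False using noncomm by blast
  qed
qed

section \<open>The symmetric group on four points\<close>

text \<open>A permutation \<open>\<sigma>\<close> of \<open>{0,1,2,3}\<close> is the list \<open>[\<sigma> 0, \<sigma> 1, \<sigma> 2, \<sigma> 3]\<close>, so that
  \<open>perm4_comp l m\<close> is the composition \<open>l \<circ> m\<close>; all facts about the 24 elements are
  checked by evaluation.\<close>

definition perm4_list :: "nat list list" where
  "perm4_list = [[a,b,c,d]. a \<leftarrow> [0..<4], b \<leftarrow> [0..<4], c \<leftarrow> [0..<4], d \<leftarrow> [0..<4],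
     distinct [a,b,c,d]]"

definition perm4_comp :: "nat list \<Rightarrow> nat list \<Rightarrow> nat list" where
  "perm4_comp l m = map (\<lambda>i. l ! i) m"

definition perm4_inv :: "nat list \<Rightarrow> nat list" where
  "perm4_inv l = map (\<lambda>i. if l!0 = i then 0 else if l!1 = i then 1 else if l!2 = i then 2 else 3) [0,1,2,3]"

definition Sym4 :: "nat list monoid" where
  "Sym4 = \<lparr>carrier = set perm4_list, monoid.mult = perm4_comp, one = [0,1,2,3]\<rparr>"

lemma perm4_list_bounded:
  "l \<in> set perm4_list \<Longrightarrow> length l = 4 \<and> (\<forall>i\<in>set l. i < 4)"
  unfolding perm4_list_def by auto

lemma perm4_group_facts:
  "\<forall>l\<in>set perm4_list. \<forall>m\<in>set perm4_list. perm4_comp l m \<in> set perm4_list"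
  "\<forall>l\<in>set perm4_list. perm4_comp [0,1,2,3] l = l"
  "\<forall>l\<in>set perm4_list. perm4_inv l \<in> set perm4_list \<and> perm4_comp (perm4_inv l) l = [0,1,2,3]"
  "[0,1,2,3] \<in> set perm4_list"
  by code_simp+

lemma perm4_comp_assoc:
  assumes "\<forall>i\<in>set k. i < length m"
  shows "perm4_comp (perm4_comp l m) k = perm4_comp l (perm4_comp m k)"
  using assms unfolding perm4_comp_def by auto

lemma group_Sym4: "group Sym4"
proof (rule groupI)
  fix x y z assume "x \<in> carrier Sym4" "y \<in> carrier Sym4" "z \<in> carrier Sym4"
  then show "x \<otimes>\<^bsub>Sym4\<^esub> y \<otimes>\<^bsub>Sym4\<^esub> z = x \<otimes>\<^bsub>Sym4\<^esub> (y \<otimes>\<^bsub>Sym4\<^esub> z)"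
    using perm4_comp_assoc perm4_list_bounded by (simp add: Sym4_def)
qed (use perm4_group_facts in \<open>auto simp: Sym4_def\<close>)

lemma inv_Sym4: "p \<in> carrier Sym4 \<Longrightarrow> inv\<^bsub>Sym4\<^esub> p = perm4_inv p"
  using perm4_group_facts(3) by (intro group.inv_equality[OF group_Sym4]) (auto simp: Sym4_def)

definition perm4_inversions :: "nat list \<Rightarrow> nat" where
  "perm4_inversions p = length [(i,j). i \<leftarrow> [0..<4], j \<leftarrow> [0..<4], i < j, p!j < p!i]"

definition Alt4 :: "nat list list" where
  "Alt4 = filter (\<lambda>p. even (perm4_inversions p)) perm4_list"

definition Klein4 :: "nat list list" where
  "Klein4 = [[0,1,2,3],[1,0,3,2],[2,3,0,1],[3,2,1,0]]"

lemma normal_Sym4I: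
  assumes "set L \<subseteq> set perm4_list" "[0,1,2,3] \<in> set L"
    "\<forall>p\<in>set L. perm4_inv p \<in> set L \<and> (\<forall>q\<in>set L. perm4_comp p q \<in> set L)"
    "\<forall>p\<in>set perm4_list. \<forall>q\<in>set L. perm4_comp (perm4_comp p q) (perm4_inv p) \<in> set L"
  shows "set L \<lhd> Sym4"
proof -
  have inv: "inv\<^bsub>Sym4\<^esub> p = perm4_inv p" if "p \<in> set L" for p
    using inv_Sym4 assms(1) that by (auto simp: Sym4_def)
  have sub: "subgroup (set L) Sym4"
    by (rule group.subgroupI[OF group_Sym4]) (use assms inv in \<open>auto simp: Sym4_def\<close>)
  show ?thesis
  proof (rule group.normal_inv_iff[OF group_Sym4, THEN iffD2, OF conjI[OF sub]], intro ballI)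
    fix p q assume "p \<in> carrier Sym4" "q \<in> set L"
    then show "p \<otimes>\<^bsub>Sym4\<^esub> q \<otimes>\<^bsub>Sym4\<^esub> inv\<^bsub>Sym4\<^esub> p \<in> set L"
      using assms(4) inv_Sym4 by (simp add: Sym4_def)
  qed
qed

lemma Alt4_normal: "set Alt4 \<lhd> Sym4"
  by (rule normal_Sym4I) (unfold Alt4_def; code_simp)+

lemma Klein4_normal: "set Klein4 \<lhd> Sym4"
  by (rule normal_Sym4I) (unfold Klein4_def; code_simp)+

lemma Sym4_derived_series:
  "\<forall>p\<in>set perm4_list. \<forall>q\<in>set perm4_list.
     perm4_comp (perm4_comp (perm4_comp p q) (perm4_inv p)) (perm4_inv q) \<in> set Alt4"
  "\<forall>p\<in>set Alt4. \<forall>q\<in>set Alt4.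
     perm4_comp (perm4_comp (perm4_comp p q) (perm4_inv p)) (perm4_inv q) \<in> set Klein4"
  "\<forall>p\<in>set Klein4. \<forall>q\<in>set Klein4. perm4_comp p q = perm4_comp q p"
  by code_simp+

lemma abelian_socle_if_inj_hom_Sym4:
  assumes G: "group G" and h: "h \<in> hom G Sym4" and inj: "inj_on h (carrier G)"
  shows "abelian_socle G"
proof -
  interpret group_hom G Sym4 h
    using G group_Sym4 h by (simp add: group_hom_def group_hom_axioms_def)
  have sub: "set Alt4 \<subseteq> set perm4_list"
    using Alt4_normal normal_imp_subgroup subgroup.subset by (fastforce simp: Sym4_def)
  show ?thesis
  proof (rule abelian_socle_if_inj_hom_derived_length_3[OF inj Alt4_normal Klein4_normal])
    show "\<forall>x\<in>carrier Sym4. \<forall>y\<in>carrier Sym4.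
        x \<otimes>\<^bsub>Sym4\<^esub> y \<otimes>\<^bsub>Sym4\<^esub> inv\<^bsub>Sym4\<^esub> x \<otimes>\<^bsub>Sym4\<^esub> inv\<^bsub>Sym4\<^esub> y \<in> set Alt4"
      using Sym4_derived_series(1) inv_Sym4 by (simp add: Sym4_def)
    show "\<forall>x\<in>set Alt4. \<forall>y\<in>set Alt4.
        x \<otimes>\<^bsub>Sym4\<^esub> y \<otimes>\<^bsub>Sym4\<^esub> inv\<^bsub>Sym4\<^esub> x \<otimes>\<^bsub>Sym4\<^esub> inv\<^bsub>Sym4\<^esub> y \<in> set Klein4"
    proof (intro ballI)
      fix x y assume "x \<in> set Alt4" "y \<in> set Alt4"
      moreover have "x \<in> carrier Sym4" "y \<in> carrier Sym4" using calculation sub by (auto simp: Sym4_def)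
      ultimately show "x \<otimes>\<^bsub>Sym4\<^esub> y \<otimes>\<^bsub>Sym4\<^esub> inv\<^bsub>Sym4\<^esub> x \<otimes>\<^bsub>Sym4\<^esub> inv\<^bsub>Sym4\<^esub> y \<in> set Klein4"
        using Sym4_derived_series(2) by (simp add: inv_Sym4, simp add: Sym4_def)
    qed
    show "\<forall>x\<in>set Klein4. \<forall>y\<in>set Klein4. x \<otimes>\<^bsub>Sym4\<^esub> y = y \<otimes>\<^bsub>Sym4\<^esub> x"
      using Sym4_derived_series(3) by (simp add: Sym4_def)
  qed
qed

section \<open>Maximal subgroups and the normal core\<close>

lemma card_image_eq_if_same_fibres:
  assumes "\<forall>a\<in>A. \<forall>b\<in>A. f a = f b \<longleftrightarrow> g a = g b"
  shows "card (f ` A) = card (g ` A)"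
proof -
  define \<phi> where "\<phi> y = f (inv_into A g y)" for y
  have \<phi>: "\<phi> (g a) = f a" if "a \<in> A" for a
  proof -
    have "inv_into A g (g a) \<in> A" "g (inv_into A g (g a)) = g a"
      using that by (auto intro: inv_into_into f_inv_into_f)
    then show ?thesis unfolding \<phi>_def using assms that by blast
  qed
  have "inj_on \<phi> (g ` A)"
    by (rule inj_onI) (use \<phi> assms in force)
  moreover have "\<phi> ` g ` A = f ` A" using \<phi> by (auto simp: image_image)
  ultimately show ?thesis by (metis card_image)
qed

context group
begin

lemma maximal_subgroupD:
  assumes "maximal_subgroup G M"
  shows "subgroup M G" "M \<noteq> carrier G" "\<And>H. subgroup H G \<Longrightarrow> M \<subseteq> H \<Longrightarrow> H = M \<or> H = carrier G"
  using assms unfolding maximal_subgroup_def by auto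

lemma exists_maximal_subgroup:
  assumes fin: "finite (carrier G)" and H: "subgroup H G" and ne: "H \<noteq> carrier G"
  shows "\<exists>M. maximal_subgroup G M \<and> H \<subseteq> M"
proof -
  let ?A = "{K. subgroup K G \<and> K \<noteq> carrier G}"
  have "finite ?A"
    by (rule finite_subset[of _ "Pow (carrier G)"]) (use fin subgroup.subset in auto)
  then obtain M where "M \<in> ?A" "H \<subseteq> M" "\<forall>K\<in>?A. M \<subseteq> K \<longrightarrow> M = K"
    using finite_has_maximal2[of ?A H] H ne by auto
  then show ?thesis unfolding maximal_subgroup_def by blast
qed

lemma exists_minimal_normal:
  assumes fin: "finite (carrier G)" and nontrivial: "carrier G \<noteq> {\<one>}"
  shows "\<exists>N. minimal_normal G N"
proof -
  let ?A = "{K. K \<lhd> G \<and> K \<noteq> {\<one>}}"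
  have "finite ?A"
    by (rule finite_subset[of _ "Pow (carrier G)"])
      (use fin in \<open>auto dest!: normal_imp_subgroup subgroup.subset\<close>)
  moreover have "carrier G \<in> ?A" using nontrivial normal_self by auto
  ultimately obtain N where "N \<in> ?A" "\<forall>K\<in>?A. K \<subseteq> N \<longrightarrow> N = K"
    using finite_has_minimal by blast
  then show ?thesis unfolding minimal_normal_def by blast
qed

lemma rcoset_eq_iff:
  assumes H: "subgroup H G" and x: "x \<in> carrier G" and y: "y \<in> carrier G"
  shows "H #> x = H #> y \<longleftrightarrow> x \<otimes> inv y \<in> H"
proof
  assume "H #> x = H #> y"
  then have "x \<in> H #> y" using rcos_self[OF x H] by simp
  then show "x \<otimes> inv y \<in> H" using subgroup.rcos_module_imp[OF H is_group y] by blast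
next
  assume "x \<otimes> inv y \<in> H"
  then have "x \<in> H #> y" using subgroup.rcos_module[OF H is_group y x] by blast
  then show "H #> x = H #> y" using repr_independence[OF _ y H] by simp
qed

lemma rcoset_eq_self_iff:
  assumes H: "subgroup H G" and x: "x \<in> carrier G"
  shows "H #> x = H \<longleftrightarrow> x \<in> H"
  using rcoset_eq_iff[OF H x one_closed] x H by (simp add: subgroup.subset)

lemma core_eq:
  assumes M: "subgroup M G"
  shows "core G M = {x \<in> carrier G. \<forall>g\<in>carrier G. inv g \<otimes> x \<otimes> g \<in> M}"
proof -
  have "x \<in> (g <# M) #> inv g \<longleftrightarrow> x \<in> carrier G \<and> inv g \<otimes> x \<otimes> g \<in> M"
    if g: "g \<in> carrier G" for g x
  proof
    assume "x \<in> (g <# M) #> inv g"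
    then obtain m where m: "m \<in> M" "x = g \<otimes> m \<otimes> inv g"
      unfolding l_coset_def r_coset_def by auto
    then show "x \<in> carrier G \<and> inv g \<otimes> x \<otimes> g \<in> M"
      using g M subgroup.subset by (fastforce simp: m_assoc)
  next
    assume x: "x \<in> carrier G \<and> inv g \<otimes> x \<otimes> g \<in> M"
    then have "x = g \<otimes> (inv g \<otimes> x \<otimes> g) \<otimes> inv g" using g by (simp add: m_assoc)
    then show "x \<in> (g <# M) #> inv g"
      using x unfolding l_coset_def r_coset_def by blast
  qed
  then show ?thesis unfolding core_def by auto
qed

lemma core_subset: "subgroup M G \<Longrightarrow> core G M \<subseteq> M"
  using core_eq[of M] by (auto dest: bspec[where x=\<one>])

lemma core_normal:
  assumes M: "subgroup M G"
  shows "core G M \<lhd> G"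
proof -
  have conj: "inv g \<otimes> (x \<otimes> y) \<otimes> g = (inv g \<otimes> x \<otimes> g) \<otimes> (inv g \<otimes> y \<otimes> g)"
    "inv g \<otimes> inv x \<otimes> g = inv (inv g \<otimes> x \<otimes> g)"
    "inv g \<otimes> (h \<otimes> x \<otimes> inv h) \<otimes> g = inv (inv h \<otimes> g) \<otimes> x \<otimes> (inv h \<otimes> g)"
    if "g \<in> carrier G" "h \<in> carrier G" "x \<in> carrier G" "y \<in> carrier G" for g h x y
    using that by (simp_all add: m_assoc inv_mult_group)
  have sub: "subgroup (core G M) G"
    by (rule subgroupI)
      (use M conj in \<open>auto simp: core_eq subgroup.m_closed subgroup.m_inv_closed subgroup.one_closed\<close>)
  show ?thesis
  proof (rule normal_inv_iff[THEN iffD2, OF conjI[OF sub]], intro ballI)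
    fix h x assume "h \<in> carrier G" "x \<in> core G M"
    then show "h \<otimes> x \<otimes> inv h \<in> core G M" using M conj(3) by (auto simp: core_eq)
  qed
qed

lemma normal_subset_core:
  assumes M: "subgroup M G" and L: "L \<lhd> G" and LM: "L \<subseteq> M"
  shows "L \<subseteq> core G M"
proof
  fix x assume x: "x \<in> L"
  have "inv g \<otimes> x \<otimes> inv (inv g) \<in> L" if "g \<in> carrier G" for g
    using L x that normal_inv_iff by blast
  then show "x \<in> core G M"
    using x LM L normal_imp_subgroup subgroup.subset unfolding core_eq[OF M] by fastforce
qed

end

section \<open>Abelian minimal normal subgroups have prime-power order\<close>

context group
begin

lemma ord_dvd_card_subgroup:
  assumes fin: "finite (carrier G)" and P: "subgroup P G" and z: "z \<in> P"
  shows "ord z dvd card P"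
proof -
  interpret P: group "G\<lparr>carrier := P\<rparr>" by (rule subgroup_imp_group[OF P])
  have "z [^]\<^bsub>G\<lparr>carrier := P\<rparr>\<^esub> Coset.order (G\<lparr>carrier := P\<rparr>) = \<one>\<^bsub>G\<lparr>carrier := P\<rparr>\<^esub>"
    using z by (intro P.pow_order_eq_1) simp
  then have "z [^] card P = \<one>" by (simp add: Coset.order_def nat_pow_consistent[symmetric])
  then show ?thesis using pow_eq_id z P subgroup.subset by blast
qed

lemma card_eq_prime_power_if_pow_prime_eq_one:
  assumes fin: "finite (carrier G)" and p: "Factorial_Ring.prime (p::nat)"
    and exp: "\<forall>x\<in>carrier G. x [^] p = \<one>"
  shows "card (carrier G) = p ^ multiplicity p (card (carrier G))"
proof -
  have pos: "card (carrier G) > 0" using fin one_closed by (auto simp: card_gt_0_iff)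
  have "q = p" if q: "q \<in> prime_factors (card (carrier G))" for q
  proof -
    have "Factorial_Ring.prime q" using q by auto
    obtain m where "card (carrier G) = q ^ multiplicity q (card (carrier G)) * m"
      using multiplicity_dvd[of q "card (carrier G)"] by (metis dvd_div_mult_self mult.commute)
    then obtain P where P: "subgroup P G" "card P = q ^ multiplicity q (card (carrier G))"
      using sylow_thm[OF \<open>Factorial_Ring.prime q\<close> is_group _ fin] by (auto simp: Coset.order_def)
    have "multiplicity q (card (carrier G)) > 0"
      using q by (simp add: prime_factors_multiplicity)
    then have "card P \<noteq> 1" using P(2) \<open>Factorial_Ring.prime q\<close> by (auto dest: prime_gt_1_nat)
    then have "P \<noteq> {\<one>}" by auto
    then obtain z where z: "z \<in> P" "z \<noteq> \<one>" using subgroup.one_closed[OF P(1)] by blast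
    have zc: "z \<in> carrier G" using z P(1) subgroup.subset by blast
    have "ord z dvd p" using exp zc pow_eq_id by blast
    moreover have "ord z \<noteq> 1" using ord_eq_1[OF zc] z(2) by simp
    ultimately have "ord z = p" using p unfolding prime_nat_iff by blast
    then have "p dvd q ^ multiplicity q (card (carrier G))"
      using ord_dvd_card_subgroup[OF fin P(1) z(1)] P(2) by simp
    then have "p dvd q" using p prime_dvd_power by blast
    then show "q = p" using p \<open>Factorial_Ring.prime q\<close> primes_dvd_imp_eq by blast
  qed
  then have "prime_factors (card (carrier G)) \<subseteq> {p}" by blast
  then have "card (carrier G) = (\<Prod>q\<in>{p} \<inter> prime_factors (card (carrier G)). q ^ multiplicity q (card (carrier G)))"
    using prod_prime_factors[of "card (carrier G)"] pos by (simp add: Int_absorb1)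
  also have "\<dots> = p ^ multiplicity p (card (carrier G))"
    using p by (cases "p \<in> prime_factors (card (carrier G))") (auto simp: prime_factors_multiplicity)
  finally show ?thesis .
qed

lemma subgroup_pow_closed:
  assumes "subgroup H G" "x \<in> H" shows "x [^] (n::nat) \<in> H"
proof (induction n)
  case (Suc n) then show ?case using assms subgroup.m_closed by simp
qed (use assms subgroup.one_closed in simp)

lemma conj_pow:
  assumes g: "g \<in> carrier G" and z: "z \<in> carrier G"
  shows "(g \<otimes> z \<otimes> inv g) [^] (n::nat) = g \<otimes> z [^] n \<otimes> inv g"
  by (induction n) (use g z in \<open>simp_all add: m_assoc\<close>)

lemma cyclic_subgroup_has_prime_order_elem:
  assumes fin: "finite (carrier G)" and x: "x \<in> carrier G" "x \<noteq> \<one>"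
  obtains p :: nat and y where "Factorial_Ring.prime p" "y \<in> generate G {x}" "y \<noteq> \<one>" "y [^] p = \<one>"
proof -
  have "ord x \<noteq> 1" using ord_eq_1 x by simp
  then obtain p where p: "Factorial_Ring.prime p" "p dvd ord x" using prime_factor_nat by blast
  define y where "y = x [^] (ord x div p)"
  have ord_pos: "ord x > 0" using ord_ge_1[OF fin x(1)] by simp
  have "y \<in> generate G {x}"
    unfolding y_def using x(1) generate_is_subgroup[of "{x}"]
    by (intro subgroup_pow_closed) (auto intro: generate.incl)
  moreover have "y \<noteq> \<one>"
  proof
    assume "y = \<one>"
    then have "ord x dvd ord x div p" using pow_eq_id[OF x(1)] unfolding y_def by simp
    moreover have "0 < ord x div p" "ord x div p < ord x"
      using p ord_pos prime_gt_1_nat by (auto elim!: dvdE)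
    ultimately show False using dvd_imp_le by fastforce
  qed
  moreover have "y [^] p = \<one>"
    using p x(1) unfolding y_def by (simp add: nat_pow_pow)
  ultimately show ?thesis by (rule that[OF p(1)])
qed

lemma abelian_minimal_normal_pow_prime:
  assumes fin: "finite (carrier G)" and N: "minimal_normal G N"
    and comm: "\<forall>x\<in>N. \<forall>y\<in>N. x \<otimes> y = y \<otimes> x"
  obtains p :: nat where "Factorial_Ring.prime p" "\<forall>z\<in>N. z [^] p = \<one>"
proof -
  note ND = minimal_normalD[OF N]
  obtain x where x: "x \<in> N" "x \<noteq> \<one>" using ND(4) subgroup.one_closed[OF ND(2)] by blast
  then have "x \<in> carrier G" using ND(3) by blast
  then obtain p :: nat and y where p: "Factorial_Ring.prime p"
    and y: "y \<in> generate G {x}" "y \<noteq> \<one>" "y [^] p = \<one>"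
    by (rule cyclic_subgroup_has_prime_order_elem[OF fin _ x(2)])
  have "generate G {x} \<subseteq> N" by (rule generate_subgroup_incl) (use x(1) ND(2) in auto)
  then have "y \<in> N" using y(1) by (rule subsetD)
  define L where "L = {z \<in> N. z [^] p = \<one>}"
  have "subgroup L G"
  proof (rule subgroupI)
    show "L \<subseteq> carrier G" using ND(3) unfolding L_def by auto
    have "\<one> \<in> L" using subgroup.one_closed[OF ND(2)] unfolding L_def by simp
    then show "L \<noteq> {}" by blast
    fix a b assume a: "a \<in> L" and b: "b \<in> L"
    then have ab: "a \<in> N" "b \<in> N" "a \<in> carrier G" "b \<in> carrier G"
      using ND(3) unfolding L_def by auto
    then have "(a \<otimes> b) [^] p = a [^] p \<otimes> b [^] p"
      using comm pow_mult_distrib by blast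
    then show "a \<otimes> b \<in> L" using a b ab subgroup.m_closed[OF ND(2)] unfolding L_def by simp
    show "inv a \<in> L" using a ab subgroup.m_inv_closed[OF ND(2)] unfolding L_def by (simp add: nat_pow_inv)
  qed
  moreover have "g \<otimes> z \<otimes> inv g \<in> L" if g: "g \<in> carrier G" and z: "z \<in> L" for g z
  proof -
    have "z \<in> N" "z \<in> carrier G" "z [^] p = \<one>" using z ND(3) unfolding L_def by auto
    then show ?thesis using g ND(1) normal_inv_iff conj_pow unfolding L_def by simp
  qed
  ultimately have "L \<lhd> G" by (intro normal_inv_iff[THEN iffD2]) blast
  moreover have "L \<subseteq> N" "L \<noteq> {\<one>}" using \<open>y \<in> N\<close> y unfolding L_def by blast+
  ultimately have "L = N" using ND(5) by blast
  then show ?thesis using that p unfolding L_def by blast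
qed

lemma card_abelian_minimal_normal_prime_power:
  assumes fin: "finite (carrier G)" and N: "minimal_normal G N"
    and comm: "\<forall>x\<in>N. \<forall>y\<in>N. x \<otimes> y = y \<otimes> x"
  shows "\<exists>p a. Factorial_Ring.prime p \<and> 0 < a \<and> card N = p ^ a"
proof -
  note ND = minimal_normalD[OF N]
  obtain p :: nat where p: "Factorial_Ring.prime p" "\<forall>z\<in>N. z [^] p = \<one>"
    using abelian_minimal_normal_pow_prime[OF fin N comm] by blast
  interpret N: group "G\<lparr>carrier := N\<rparr>" by (rule subgroup_imp_group[OF ND(2)])
  have "card (carrier (G\<lparr>carrier := N\<rparr>)) = p ^ multiplicity p (card (carrier (G\<lparr>carrier := N\<rparr>)))"
    using p fin ND(3) finite_subset
    by (intro N.card_eq_prime_power_if_pow_prime_eq_one) (auto simp: nat_pow_consistent[symmetric])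
  then have card: "card N = p ^ multiplicity p (card N)" by simp
  moreover have "card N \<noteq> 1"
  proof
    assume "card N = 1"
    then obtain a where "N = {a}" by (rule card_1_singletonE)
    then show False using ND(4) subgroup.one_closed[OF ND(2)] by blast
  qed
  ultimately have "multiplicity p (card N) \<noteq> 0" by (metis power_0)
  then show ?thesis using card p(1) by (blast intro: gr0I)
qed

end

section \<open>Maximal subgroups of type A have prime-power index\<close>

lemma (in normal) rcoset_group_hom: "group_hom G (G Mod H) (\<lambda>x. H #> x)"
  using factorgroup_is_group r_coset_hom_Mod is_group
  by (simp add: group_hom_def group_hom_axioms_def)

lemma (in normal) rcoset_image_vimage:
  assumes "N \<subseteq> carrier (G Mod H)"
  shows "(\<lambda>x. H #> x) ` {x \<in> carrier G. H #> x \<in> N} = N"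
  using assms by (auto simp: carrier_FactGroup)

lemma (in normal) commutator_mem_if_rcosets_commute:
  assumes x: "x \<in> carrier G" and y: "y \<in> carrier G"
    and comm: "(H #> x) \<otimes>\<^bsub>G Mod H\<^esub> (H #> y) = (H #> y) \<otimes>\<^bsub>G Mod H\<^esub> (H #> x)"
  shows "x \<otimes> y \<otimes> inv x \<otimes> inv y \<in> H"
proof -
  interpret Q: group "G Mod H" by (rule factorgroup_is_group)
  interpret \<pi>: group_hom G "G Mod H" "\<lambda>x. H #> x" by (rule rcoset_group_hom)
  have "H #> (x \<otimes> y \<otimes> inv x \<otimes> inv y)
      = (H #> x) \<otimes>\<^bsub>G Mod H\<^esub> (H #> y) \<otimes>\<^bsub>G Mod H\<^esub> inv\<^bsub>G Mod H\<^esub> (H #> x) \<otimes>\<^bsub>G Mod H\<^esub> inv\<^bsub>G Mod H\<^esub> (H #> y)"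
    using x y by (simp add: \<pi>.hom_mult \<pi>.hom_inv)
  also have "\<dots> = \<one>\<^bsub>G Mod H\<^esub>"
    using comm x y by (intro Q.commutator_eq_one_if_commute) simp_all
  finally have "H #> (x \<otimes> y \<otimes> inv x \<otimes> inv y) = H" by simp
  moreover have "x \<otimes> y \<otimes> inv x \<otimes> inv y \<in> carrier G" using x y by simp
  ultimately show ?thesis using rcoset_eq_self_iff[OF subgroup_axioms] by blast
qed

context group
begin

lemma normal_mult_eq_carrier_if_not_subset_maximal:
  assumes M: "maximal_subgroup G M" and K: "K \<lhd> G" and KM: "\<not> K \<subseteq> M"
  shows "K <#> M = carrier G"
proof -
  interpret second_isomorphism_grp K G M
    using K maximal_subgroupD(1)[OF M]
    by (simp add: second_isomorphism_grp_def second_isomorphism_grp_axioms_def)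
  have "K <#> M \<noteq> M" using H_contained_in_set_mult KM by blast
  then show ?thesis
    using maximal_subgroupD(3)[OF M normal_set_mult_subgroup S_contained_in_set_mult] by blast
qed

lemma card_rcosets_eq_card_rcosets_inter:
  assumes M: "subgroup M G" and K: "subgroup K G" and KM: "K <#> M = carrier G"
  shows "card (rcosets M) = card ((\<lambda>k. (M \<inter> K) #> k) ` K)"
proof -
  have MK: "subgroup (M \<inter> K) G" by (rule subgroups_Inter_pair[OF M K])
  have Kc: "K \<subseteq> carrier G" and Mc: "M \<subseteq> carrier G" using K M subgroup.subset by auto
  have "rcosets M \<subseteq> (\<lambda>k. M #> k) ` K"
  proof
    fix Y assume "Y \<in> rcosets M"
    then obtain g where g: "g \<in> carrier G" "Y = M #> g" unfolding RCOSETS_def by auto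
    then obtain k m where km: "k \<in> K" "m \<in> M" "inv g = k \<otimes> m"
      using KM inv_closed unfolding set_mult_def by blast
    have kc: "k \<in> carrier G" and mc: "m \<in> carrier G" using km Kc Mc by auto
    have "g = inv (k \<otimes> m)" using km(3) g(1) inv_inv by metis
    then have "g = inv m \<otimes> inv k" using kc mc by (simp add: inv_mult_group)
    then have "g \<otimes> inv (inv k) \<in> M"
      using kc mc km(2) subgroup.m_inv_closed[OF M] by (simp add: m_assoc)
    then have "Y = M #> inv k" using g rcoset_eq_iff[OF M g(1)] kc by simp
    then show "Y \<in> (\<lambda>k. M #> k) ` K" using km(1) subgroup.m_inv_closed[OF K] by blast
  qed
  then have "rcosets M = (\<lambda>k. M #> k) ` K" using Kc Mc by (auto intro: rcosetsI)
  moreover have "\<forall>a\<in>K. \<forall>b\<in>K. M #> a = M #> b \<longleftrightarrow> (M \<inter> K) #> a = (M \<inter> K) #> b"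
  proof (intro ballI)
    fix a b assume ab: "a \<in> K" "b \<in> K"
    then have "a \<otimes> inv b \<in> K" using subgroup.m_closed[OF K] subgroup.m_inv_closed[OF K] by blast
    moreover have "a \<in> carrier G" "b \<in> carrier G" using ab Kc by auto
    ultimately show "M #> a = M #> b \<longleftrightarrow> (M \<inter> K) #> a = (M \<inter> K) #> b"
      using rcoset_eq_iff[OF M] rcoset_eq_iff[OF MK] by simp
  qed
  ultimately show ?thesis by (simp add: card_image_eq_if_same_fibres)
qed

lemma inter_eq_core_if_commutators_in_core:
  assumes M: "subgroup M G" and K: "K \<lhd> G" and KM: "K <#> M = carrier G"
    and CK: "core G M \<subseteq> K" and comm: "\<forall>x\<in>K. \<forall>y\<in>K. x \<otimes> y \<otimes> inv x \<otimes> inv y \<in> core G M"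
  shows "M \<inter> K = core G M"
proof
  show "core G M \<subseteq> M \<inter> K" using CK core_subset[OF M] by auto
  have Ks: "subgroup K G" using K normal_imp_subgroup by blast
  have Kc: "K \<subseteq> carrier G" and Mc: "M \<subseteq> carrier G" using Ks M subgroup.subset by auto
  have "g \<otimes> x \<otimes> inv g \<in> M \<inter> K" if g: "g \<in> carrier G" and x: "x \<in> M \<inter> K" for g x
  proof -
    obtain k m where km: "k \<in> K" "m \<in> M" "g = k \<otimes> m" using g KM unfolding set_mult_def by blast
    have kc: "k \<in> carrier G" and mc: "m \<in> carrier G" and xc: "x \<in> carrier G" using km x Kc Mc by auto
    define y where "y = m \<otimes> x \<otimes> inv m"
    have yK: "y \<in> K" unfolding y_def using K mc x normal_inv_iff by blast
    have yM: "y \<in> M" unfolding y_def using x km(2) subgroup.m_closed[OF M] subgroup.m_inv_closed[OF M] by auto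
    have yc: "y \<in> carrier G" using yK Kc by auto
    have "g \<otimes> x \<otimes> inv g = k \<otimes> y \<otimes> inv k"
      unfolding y_def km(3) using kc mc xc by (simp add: m_assoc inv_mult_group)
    also have "\<dots> = y \<otimes> (inv y \<otimes> k \<otimes> inv (inv y) \<otimes> inv k)"
      using kc yc by (simp add: m_assoc)
    finally have eq: "g \<otimes> x \<otimes> inv g = y \<otimes> (inv y \<otimes> k \<otimes> inv (inv y) \<otimes> inv k)" .
    have "inv y \<otimes> k \<otimes> inv (inv y) \<otimes> inv k \<in> M"
      using comm subgroup.m_inv_closed[OF Ks yK] km(1) core_subset[OF M] by blast
    then have "g \<otimes> x \<otimes> inv g \<in> M" using eq yM subgroup.m_closed[OF M] by simp
    moreover have "g \<otimes> x \<otimes> inv g \<in> K" using K g x normal_inv_iff by blast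
    ultimately show ?thesis by blast
  qed
  then have "M \<inter> K \<lhd> G"
    by (intro normal_inv_iff[THEN iffD2] conjI subgroups_Inter_pair[OF M Ks]) blast
  then show "M \<inter> K \<subseteq> core G M" using normal_subset_core[OF M] by blast
qed

lemma index_maximal_eq_card_abelian_minimal_normal:
  assumes M: "maximal_subgroup G M" and N: "minimal_normal (G Mod core G M) N"
    and N_comm: "\<forall>a\<in>N. \<forall>b\<in>N. a \<otimes>\<^bsub>G Mod core G M\<^esub> b = b \<otimes>\<^bsub>G Mod core G M\<^esub> a"
  shows "card (rcosets M) = card N"
proof -
  note MD = maximal_subgroupD[OF M]
  define C where "C = core G M"
  interpret C: normal C G unfolding C_def by (rule core_normal[OF MD(1)])
  interpret Q: group "G Mod C" by (rule C.factorgroup_is_group)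
  note ND = Q.minimal_normalD[OF N[folded C_def]]
  txt \<open>For the preimage \<open>K\<close> of \<open>N\<close>, maximality gives \<open>G = KM\<close>, and \<open>M \<inter> K = C\<close> because
    \<open>K/C\<close> is abelian; hence \<open>|G:M| = |K:C| = |N|\<close>.\<close>
  define K where "K = {x \<in> carrier G. C #> x \<in> N}"
  have K: "K \<lhd> G" unfolding K_def by (rule group_hom.normal_vimage[OF C.rcoset_group_hom ND(1)])
  have Kc: "K \<subseteq> carrier G" unfolding K_def by blast
  have NK: "(\<lambda>x. C #> x) ` K = N" unfolding K_def by (rule C.rcoset_image_vimage[OF ND(3)])
  have CK: "C \<subseteq> K"
  proof
    fix c assume c: "c \<in> C"
    then have "c \<in> carrier G" using C.subset by blast
    moreover have "C #> c = \<one>\<^bsub>G Mod C\<^esub>"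
      using c calculation rcoset_eq_self_iff[OF C.subgroup_axioms] by simp
    ultimately show "c \<in> K" using subgroup.one_closed[OF ND(2)] unfolding K_def by simp
  qed
  have comm: "\<forall>x\<in>K. \<forall>y\<in>K. x \<otimes> y \<otimes> inv x \<otimes> inv y \<in> C"
  proof (intro ballI)
    fix x y assume "x \<in> K" "y \<in> K"
    then show "x \<otimes> y \<otimes> inv x \<otimes> inv y \<in> C"
      using C.commutator_mem_if_rcosets_commute N_comm unfolding K_def C_def by simp
  qed
  have "\<not> K \<subseteq> M"
  proof
    assume "K \<subseteq> M"
    then have "K \<subseteq> C" unfolding C_def by (rule normal_subset_core[OF MD(1) K])
    then have "N \<subseteq> {C}" using NK Kc rcoset_eq_self_iff[OF C.subgroup_axioms] by blast
    then show False using ND(4) subgroup.one_closed[OF ND(2)] by auto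
  qed
  then have KM: "K <#> M = carrier G" by (rule normal_mult_eq_carrier_if_not_subset_maximal[OF M K])
  then have "M \<inter> K = C"
    unfolding C_def using inter_eq_core_if_commutators_in_core[OF MD(1) K] CK comm C_def by blast
  then show ?thesis
    using card_rcosets_eq_card_rcosets_inter[OF MD(1) normal_imp_subgroup[OF K] KM] NK by simp
qed

lemma index_prime_power_if_abelian_socle:
  assumes fin: "finite (carrier G)" and M: "maximal_subgroup G M"
    and abelian: "abelian_socle (G Mod core G M)"
  shows "\<exists>p a. Factorial_Ring.prime p \<and> 0 < a \<and> card (rcosets M) = p ^ a"
proof -
  note MD = maximal_subgroupD[OF M]
  interpret C: normal "core G M" G by (rule core_normal[OF MD(1)])
  interpret Q: group "G Mod core G M" by (rule C.factorgroup_is_group)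
  have finQ: "finite (carrier (G Mod core G M))" using fin by (simp add: carrier_FactGroup)
  obtain g where g: "g \<in> carrier G" "g \<notin> M" using MD(1,2) subgroup.subset by blast
  then have "core G M #> g \<noteq> \<one>\<^bsub>G Mod core G M\<^esub>"
    using core_subset[OF MD(1)] rcoset_eq_self_iff[OF C.subgroup_axioms g(1)] by auto
  moreover have "core G M #> g \<in> carrier (G Mod core G M)" using g(1) by (simp add: carrier_FactGroup)
  ultimately obtain N where N: "minimal_normal (G Mod core G M) N"
    using Q.exists_minimal_normal[OF finQ] by blast
  have N_comm: "\<forall>a\<in>N. \<forall>b\<in>N. a \<otimes>\<^bsub>G Mod core G M\<^esub> b = b \<otimes>\<^bsub>G Mod core G M\<^esub> a"
    using Q.abelian_socle_minimal_normal[OF abelian N] by blast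
  show ?thesis
    using Q.card_abelian_minimal_normal_prime_power[OF finQ N N_comm]
      index_maximal_eq_card_abelian_minimal_normal[OF M N N_comm] by simp
qed

end

section \<open>Maximal subgroups of index at most 4 are of type A\<close>

lemma abelian_socle_quotient_if_hom_Sym4:
  assumes G: "group G" and h: "h \<in> hom G Sym4"
  shows "abelian_socle (G Mod kernel G Sym4 h)"
proof -
  interpret group_hom G Sym4 h
    using G group_Sym4 h by (simp add: group_hom_def group_hom_axioms_def)
  show ?thesis
    using normal.factorgroup_is_group[OF normal_kernel] FactGroup_hom FactGroup_inj_on
    by (rule abelian_socle_if_inj_hom_Sym4)
qed

lemma mem_perm4_list:
  assumes "length l = 4" "distinct l" "\<forall>i\<in>set l. i < 4"
  shows "l \<in> set perm4_list"
proof -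
  obtain a b c d where l: "l = [a,b,c,d]" using assms(1)
    by (auto simp: length_Suc_conv numeral_eq_Suc)
  have "a < 4" "b < 4" "c < 4" "d < 4" using assms(3) unfolding l by auto
  then show ?thesis using assms(2) unfolding l perm4_list_def by (auto simp: set_concat)
qed

text \<open>For an enumeration \<open>e\<close> of an \<open>n\<close>-element set \<open>R\<close> with \<open>n \<le> 4\<close>, a map \<open>\<sigma>\<close> on \<open>R\<close> is read
  as a permutation of \<open>{0,1,2,3}\<close> that fixes \<open>n, \<dots>, 3\<close>.\<close>

definition perm4_of :: "(nat \<Rightarrow> 'a) \<Rightarrow> nat \<Rightarrow> ('a \<Rightarrow> 'a) \<Rightarrow> nat list" where
  "perm4_of e n \<sigma> = map (\<lambda>i. if i < n then inv_into {0..<n} e (\<sigma> (e i)) else i) [0..<4]"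

lemma nth_perm4_of:
  "i < 4 \<Longrightarrow> perm4_of e n \<sigma> ! i = (if i < n then inv_into {0..<n} e (\<sigma> (e i)) else i)"
  unfolding perm4_of_def by simp

lemma length_perm4_of [simp]: "length (perm4_of e n \<sigma>) = 4"
  by (simp add: perm4_of_def)

lemma nth_perm4_comp: "i < length m \<Longrightarrow> perm4_comp l m ! i = l ! (m ! i)"
  by (simp add: perm4_comp_def)

lemma perm4_id_upt: "[0,1,2,3] = [0..<4::nat]"
  by (simp add: upt_rec)

locale perm4_enumeration =
  fixes e :: "nat \<Rightarrow> 'a" and n :: nat and R :: "'a set"
  assumes bij: "bij_betw e {0..<n} R" and le4: "n \<le> 4"
begin

lemma enum_inv [simp]: "Y \<in> R \<Longrightarrow> e (inv_into {0..<n} e Y) = Y"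
  using bij_betw_inv_into_right[OF bij] .

lemma inv_enum [simp]: "i < n \<Longrightarrow> inv_into {0..<n} e (e i) = i"
  using bij_betw_inv_into_left[OF bij] by simp

lemma enum_mem: "i < n \<Longrightarrow> e i \<in> R"
  using bij by (auto simp: bij_betw_def)

lemma inv_enum_less: "Y \<in> R \<Longrightarrow> inv_into {0..<n} e Y < n"
  using inv_into_into[of Y e "{0..<n}"] bij by (auto simp: bij_betw_def)

lemma maps_inv_enum_less: "\<sigma> ` R \<subseteq> R \<Longrightarrow> i < n \<Longrightarrow> inv_into {0..<n} e (\<sigma> (e i)) < n"
  using enum_mem[of i] inv_enum_less[of "\<sigma> (e i)"] by blast

lemma perm4_of_mem:
  assumes maps: "\<sigma> ` R \<subseteq> R" and inj: "inj_on \<sigma> R"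
  shows "perm4_of e n \<sigma> \<in> set perm4_list"
proof (rule mem_perm4_list)
  define f where "f i = (if i < n then inv_into {0..<n} e (\<sigma> (e i)) else i)" for i
  have perm: "perm4_of e n \<sigma> = map f [0..<4]" by (simp add: perm4_of_def f_def)
  have f_less: "f i < n \<longleftrightarrow> i < n" for i
    using maps_inv_enum_less[OF maps] unfolding f_def by auto
  have e: "inj_on e {0..<n}" "e ` {0..<n} = R" using bij by (auto simp: bij_betw_def)
  have "inj_on (\<sigma> \<circ> e) {0..<n}" by (rule comp_inj_on[OF e(1)]) (simp add: e(2) inj)
  moreover have "inj_on (inv_into {0..<n} e) ((\<sigma> \<circ> e) ` {0..<n})"
  proof (rule inj_on_subset)
    show "inj_on (inv_into {0..<n} e) R" using bij_betw_inv_into[OF bij] by (simp add: bij_betw_def)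
    show "(\<sigma> \<circ> e) ` {0..<n} \<subseteq> R" using maps e(2) by (simp only: image_comp[symmetric])
  qed
  ultimately have "inj_on (inv_into {0..<n} e \<circ> (\<sigma> \<circ> e)) {0..<n}" by (rule comp_inj_on)
  then have "inj_on f {0..<n}" by (rule inj_on_cong[THEN iffD1, rotated]) (simp add: f_def)
  have "inj_on f {0..<4}"
  proof (rule inj_onI)
    fix i j assume "i \<in> {0..<4}" "j \<in> {0..<4}" "f i = f j"
    have "i < n \<longleftrightarrow> j < n"
      using \<open>f i = f j\<close> f_less[of i, symmetric] f_less[of j, symmetric] by (simp only:)
    show "i = j"
    proof (cases "i < n")
      case True
      then show ?thesis
        using inj_onD[OF \<open>inj_on f {0..<n}\<close> \<open>f i = f j\<close>] \<open>i < n \<longleftrightarrow> j < n\<close> by simp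
    next
      case False
      then show ?thesis using \<open>i < n \<longleftrightarrow> j < n\<close> \<open>f i = f j\<close> by (simp add: f_def)
    qed
  qed
  then show "distinct (perm4_of e n \<sigma>)" unfolding perm by (simp add: distinct_map)
  show "length (perm4_of e n \<sigma>) = 4" by (simp add: perm4_of_def)
  have "f i < 4" if "i < 4" for i
    using f_less[of i] le4 that by (cases "i < n") (simp_all add: f_def)
  then show "\<forall>i\<in>set (perm4_of e n \<sigma>). i < 4" unfolding perm by auto
qed

lemma perm4_of_comp:
  assumes maps: "\<tau> ` R \<subseteq> R" and comp: "\<forall>Y\<in>R. \<upsilon> Y = \<sigma> (\<tau> Y)"
  shows "perm4_of e n \<upsilon> = perm4_comp (perm4_of e n \<sigma>) (perm4_of e n \<tau>)"
proof (rule nth_equalityI)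
  show "length (perm4_of e n \<upsilon>) = length (perm4_comp (perm4_of e n \<sigma>) (perm4_of e n \<tau>))"
    by (simp add: perm4_of_def perm4_comp_def)
  fix i assume "i < length (perm4_of e n \<upsilon>)"
  then have i: "i < 4" by (simp add: perm4_of_def)
  show "perm4_of e n \<upsilon> ! i = perm4_comp (perm4_of e n \<sigma>) (perm4_of e n \<tau>) ! i"
  proof (cases "i < n")
    case True
    define j where "j = inv_into {0..<n} e (\<tau> (e i))"
    have j: "j < n" "e j = \<tau> (e i)"
      using maps_inv_enum_less[OF maps True] maps enum_mem[OF True] unfolding j_def by auto
    have "perm4_of e n \<tau> ! i = j" using nth_perm4_of[OF i, of e n \<tau>] True unfolding j_def by simp
    then have "perm4_comp (perm4_of e n \<sigma>) (perm4_of e n \<tau>) ! i = perm4_of e n \<sigma> ! j"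
      using i by (simp add: nth_perm4_comp)
    also have "\<dots> = inv_into {0..<n} e (\<sigma> (\<tau> (e i)))"
      using nth_perm4_of[of j e n \<sigma>] j le4 by simp
    also have "\<dots> = perm4_of e n \<upsilon> ! i"
      using nth_perm4_of[OF i, of e n \<upsilon>] True comp enum_mem[OF True] by simp
    finally show ?thesis by simp
  next
    case False
    then show ?thesis using i by (simp add: nth_perm4_comp nth_perm4_of)
  qed
qed

lemma perm4_of_eq_id_iff:
  assumes maps: "\<sigma> ` R \<subseteq> R"
  shows "perm4_of e n \<sigma> = [0,1,2,3] \<longleftrightarrow> (\<forall>Y\<in>R. \<sigma> Y = Y)"
proof
  assume id: "perm4_of e n \<sigma> = [0,1,2,3]"
  show "\<forall>Y\<in>R. \<sigma> Y = Y"
  proof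
    fix Y assume Y: "Y \<in> R"
    define i where "i = inv_into {0..<n} e Y"
    have i: "i < n" "e i = Y" using Y inv_enum_less enum_inv unfolding i_def by auto
    have "perm4_of e n \<sigma> = [0..<4]" using id by (simp only: perm4_id_upt)
    then have "perm4_of e n \<sigma> ! i = i" using i le4 by simp
    moreover have "i < 4" using i le4 by simp
    ultimately have "inv_into {0..<n} e (\<sigma> Y) = i" using i nth_perm4_of[of i e n \<sigma>] by simp
    moreover have "\<sigma> Y \<in> R" using maps Y by blast
    ultimately show "\<sigma> Y = Y" using i enum_inv[of "\<sigma> Y"] by simp
  qed
next
  assume "\<forall>Y\<in>R. \<sigma> Y = Y"
  then show "perm4_of e n \<sigma> = [0,1,2,3]"
    unfolding perm4_id_upt by (intro nth_equalityI) (simp_all add: nth_perm4_of enum_mem)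
qed

end

context group
begin

lemma rcosets_mult_mem:
  assumes M: "subgroup M G" and Y: "Y \<in> rcosets M" and g: "g \<in> carrier G"
  shows "Y #> g \<in> rcosets M"
proof -
  obtain a where a: "a \<in> carrier G" "Y = M #> a" using Y unfolding RCOSETS_def by auto
  then have "Y #> g = M #> (a \<otimes> g)" using coset_mult_assoc[OF subgroup.subset[OF M] a(1) g] by simp
  then show ?thesis using a g subgroup.subset[OF M] by (auto intro: rcosetsI)
qed

lemma rcosets_mult_mult:
  assumes M: "subgroup M G" and Y: "Y \<in> rcosets M" and g: "g \<in> carrier G" and h: "h \<in> carrier G"
  shows "Y #> g #> h = Y #> (g \<otimes> h)"
  by (rule coset_mult_assoc[OF subgroup.rcosets_carrier[OF M is_group Y] g h])

lemma inj_on_rcosets_mult: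
  assumes M: "subgroup M G" and g: "g \<in> carrier G"
  shows "inj_on (\<lambda>Y. Y #> g) (rcosets M)"
proof (rule inj_onI)
  have cancel: "W #> g #> inv g = W" if "W \<in> rcosets M" for W
    using rcosets_mult_mult[OF M that g inv_closed[OF g]] g subgroup.rcosets_carrier[OF M is_group that]
    by simp
  fix Y Z assume "Y \<in> rcosets M" "Z \<in> rcosets M" "Y #> g = Z #> g"
  then show "Y = Z" using cancel by metis
qed

lemma rcosets_fixed_iff_mem_core:
  assumes M: "subgroup M G" and g: "g \<in> carrier G"
  shows "(\<forall>Y\<in>rcosets M. Y #> g = Y) \<longleftrightarrow> g \<in> core G M"
proof
  assume fixed: "\<forall>Y\<in>rcosets M. Y #> g = Y"
  have "inv h \<otimes> g \<otimes> h \<in> M" if h: "h \<in> carrier G" for h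
  proof -
    have "M #> inv h \<in> rcosets M" using h subgroup.subset[OF M] by (auto intro: rcosetsI)
    then have "M #> inv h #> g = M #> inv h" using fixed by blast
    then have "M #> (inv h \<otimes> g) = M #> inv h"
      using coset_mult_assoc[OF subgroup.subset[OF M] inv_closed[OF h] g] by simp
    then have "inv h \<otimes> g \<otimes> inv (inv h) \<in> M" using rcoset_eq_iff[OF M] h g by simp
    then show ?thesis using h by simp
  qed
  then show "g \<in> core G M" using g core_eq[OF M] by blast
next
  assume core: "g \<in> core G M"
  show "\<forall>Y\<in>rcosets M. Y #> g = Y"
  proof
    fix Y assume "Y \<in> rcosets M"
    then obtain a where a: "a \<in> carrier G" "Y = M #> a" unfolding RCOSETS_def by auto
    have "inv (inv a) \<otimes> g \<otimes> inv a \<in> M" using core a core_eq[OF M] by blast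
    then have "a \<otimes> g \<otimes> inv a \<in> M" using a by simp
    then have "M #> (a \<otimes> g) = M #> a" using rcoset_eq_iff[OF M _ a(1)] a g by simp
    then show "Y #> g = Y" using a coset_mult_assoc[OF subgroup.subset[OF M] a(1) g] by simp
  qed
qed

lemma abelian_socle_quotient_core_if_index_le_4:
  assumes fin: "finite (carrier G)" and M: "subgroup M G" and small: "card (rcosets M) \<le> 4"
  shows "abelian_socle (G Mod core G M)"
proof -
  define R where "R = rcosets M"
  have "finite R" unfolding R_def using finite_subset[OF rcosets_subset_PowG[OF M]] fin by simp
  then obtain e where "bij_betw e {0..<card R} R" using ex_bij_betw_nat_finite by blast
  then interpret perm4_enumeration e "card R" R using small unfolding R_def by unfold_locales
  txt \<open>\<open>\<rho>\<close> is the action of \<open>G\<close> on the right cosets of \<open>M\<close>, whose kernel is the core.\<close>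
  define \<rho> where "\<rho> g = perm4_of e (card R) (\<lambda>Y. Y #> inv g)" for g
  have maps: "(\<lambda>Y. Y #> inv g) ` R \<subseteq> R" if "g \<in> carrier G" for g
    using rcosets_mult_mem[OF M] that unfolding R_def by auto
  have "\<rho> g \<in> carrier Sym4" if g: "g \<in> carrier G" for g
  proof -
    have "inj_on (\<lambda>Y. Y #> inv g) R" unfolding R_def using inj_on_rcosets_mult[OF M] g by simp
    then show ?thesis using perm4_of_mem maps g unfolding \<rho>_def by (simp add: Sym4_def)
  qed
  moreover have "\<rho> (g \<otimes> h) = \<rho> g \<otimes>\<^bsub>Sym4\<^esub> \<rho> h" if "g \<in> carrier G" "h \<in> carrier G" for g h
    using perm4_of_comp[OF maps[OF that(2)]] rcosets_mult_mult[OF M] that inv_mult_group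
    unfolding \<rho>_def R_def by (simp add: Sym4_def)
  ultimately have hom: "\<rho> \<in> hom G Sym4" by (auto intro: homI)
  have "kernel G Sym4 \<rho> = core G M"
  proof -
    have "\<rho> g = \<one>\<^bsub>Sym4\<^esub> \<longleftrightarrow> g \<in> core G M" if g: "g \<in> carrier G" for g
    proof -
      have "\<rho> g = \<one>\<^bsub>Sym4\<^esub> \<longleftrightarrow> inv g \<in> core G M"
        using perm4_of_eq_id_iff[OF maps[OF g]] rcosets_fixed_iff_mem_core[OF M inv_closed[OF g]]
        unfolding \<rho>_def R_def by (simp add: Sym4_def)
      also have "\<dots> \<longleftrightarrow> g \<in> core G M"
        using normal_imp_subgroup[OF core_normal[OF M]] g subgroup.m_inv_closed by fastforce
      finally show ?thesis .
    qed
    then show ?thesis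
      unfolding kernel_def using core_eq[OF M] by auto
  qed
  then show ?thesis using abelian_socle_quotient_if_hom_Sym4[OF is_group hom] by simp
qed

end

section \<open>Bounding the expected number of generators\<close>

lemma summable_shifted_geometric:
  fixes x c :: real
  assumes "1 < x"
  shows "summable (\<lambda>k. c / x ^ (k + t))"
proof -
  have "summable (\<lambda>k. c / x ^ t * (1 / x) ^ k)" using assms by (intro summable_mult summable_geometric) auto
  then show ?thesis by (simp add: power_add power_one_over field_simps)
qed

lemma sum_by_fibres:
  fixes f :: "'b \<Rightarrow> 'c::comm_semiring_1"
  assumes "finite S" "finite D" "g ` S \<subseteq> D"
  shows "(\<Sum>x\<in>S. f (g x)) = (\<Sum>d\<in>D. of_nat (card {x \<in> S. g x = d}) * f d)"
proof -
  have "(\<Sum>x\<in>S. f (g x)) = (\<Sum>d\<in>D. \<Sum>x\<in>{x \<in> S. g x = d}. f (g x))"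
    using sum.group[OF assms, of "\<lambda>x. f (g x)"] by simp
  also have "\<dots> = (\<Sum>d\<in>D. of_nat (card {x \<in> S. g x = d}) * f d)"
    by (rule sum.cong) simp_all
  finally show ?thesis .
qed

context group
begin

lemma finite_maximal_subgroups:
  assumes "finite (carrier G)"
  shows "finite {M. maximal_subgroup G M}"
  by (rule finite_subset[of _ "Pow (carrier G)"])
    (use assms maximal_subgroupD(1) subgroup.subset in auto)

lemma index_maximal_subgroup_bounds:
  assumes fin: "finite (carrier G)" and M: "maximal_subgroup G M"
  shows "2 \<le> card (rcosets M)" "card (rcosets M) \<le> card (carrier G)"
proof -
  note MD = maximal_subgroupD[OF M]
  have lagr: "card (rcosets M) * card M = card (carrier G)"
    using lagrange[OF MD(1)] by (simp add: Coset.order_def)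
  have "card M > 0" using subgroup.finite_imp_card_positive[OF MD(1) fin] .
  moreover have "card (carrier G) > 0" using fin one_closed by (auto simp: card_gt_0_iff)
  ultimately show "card (rcosets M) \<le> card (carrier G)" using lagr by (metis dvd_imp_le dvd_triv_left)
  have "card (rcosets M) \<noteq> 1"
    using lagr MD(2) card_subset_eq[OF fin subgroup.subset[OF MD(1)]] by auto
  moreover have "card (rcosets M) \<noteq> 0" using lagr \<open>card (carrier G) > 0\<close> by (metis mult_zero_left less_irrefl)
  ultimately show "2 \<le> card (rcosets M)" by linarith
qed

lemma one_minus_gen_prob_eq:
  assumes fin: "finite (carrier G)"
  shows "1 - gen_prob G n = real (card {f \<in> {..<n} \<rightarrow>\<^sub>E carrier G. generate G (f ` {..<n}) \<noteq> carrier G})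
    / real (card (carrier G)) ^ n"
proof -
  let ?T = "{..<n} \<rightarrow>\<^sub>E carrier G"
  let ?gen = "{f \<in> ?T. generate G (f ` {..<n}) = carrier G}"
  let ?nongen = "{f \<in> ?T. generate G (f ` {..<n}) \<noteq> carrier G}"
  have "finite ?T" using fin by (simp add: finite_PiE)
  then have "card ?T = card ?gen + card ?nongen" by (subst card_Un_disjoint[symmetric]) (auto intro: arg_cong[where f=card])
  moreover have "card ?T = card (carrier G) ^ n" by (simp add: card_PiE)
  moreover have "real (card (carrier G)) ^ n > 0" using fin one_closed by (auto simp: card_gt_0_iff)
  ultimately show ?thesis unfolding gen_prob_def by (simp add: field_simps flip: of_nat_power)
qed

lemma one_minus_gen_prob_bounds:
  assumes "finite (carrier G)"
  shows "0 \<le> 1 - gen_prob G n" "1 - gen_prob G n \<le> 1"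
proof -
  have "card {f \<in> {..<n} \<rightarrow>\<^sub>E carrier G. generate G (f ` {..<n}) \<noteq> carrier G} \<le> card ({..<n} \<rightarrow>\<^sub>E carrier G)"
    using assms by (intro card_mono) (auto simp: finite_PiE)
  then have "real (card {f \<in> {..<n} \<rightarrow>\<^sub>E carrier G. generate G (f ` {..<n}) \<noteq> carrier G}) \<le> real (card (carrier G)) ^ n"
    by (simp add: card_PiE flip: of_nat_power)
  moreover have "card (carrier G) > 0" using assms one_closed by (auto simp: card_gt_0_iff)
  ultimately show "0 \<le> 1 - gen_prob G n" "1 - gen_prob G n \<le> 1"
    using one_minus_gen_prob_eq[OF assms] by (simp_all add: divide_le_eq_1)
qed

lemma nongenerating_tuples_subset:
  assumes fin: "finite (carrier G)"
  shows "{f \<in> {..<n} \<rightarrow>\<^sub>E carrier G. generate G (f ` {..<n}) \<noteq> carrier G}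
    \<subseteq> (\<Union>M\<in>{M. maximal_subgroup G M}. {..<n} \<rightarrow>\<^sub>E M)"
proof
  fix f assume f: "f \<in> {f \<in> {..<n} \<rightarrow>\<^sub>E carrier G. generate G (f ` {..<n}) \<noteq> carrier G}"
  then have img: "f ` {..<n} \<subseteq> carrier G" by auto
  have "generate G (f ` {..<n}) \<noteq> carrier G" using f by simp
  then obtain M where M: "maximal_subgroup G M" "generate G (f ` {..<n}) \<subseteq> M"
    using exists_maximal_subgroup[OF fin generate_is_subgroup[OF img]] by blast
  have "f i \<in> M" if "i < n" for i
  proof -
    have "f i \<in> generate G (f ` {..<n})" using that by (intro generate.incl) simp
    then show ?thesis using M(2) by (rule subsetD[rotated])
  qed
  then have "f \<in> {..<n} \<rightarrow>\<^sub>E M" using f by (simp add: PiE_iff)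
  then show "f \<in> (\<Union>M\<in>{M. maximal_subgroup G M}. {..<n} \<rightarrow>\<^sub>E M)" using M(1) by blast
qed

lemma card_nongenerating_tuples_le:
  assumes fin: "finite (carrier G)"
  shows "card {f \<in> {..<n} \<rightarrow>\<^sub>E carrier G. generate G (f ` {..<n}) \<noteq> carrier G}
    \<le> (\<Sum>M\<in>{M. maximal_subgroup G M}. card M ^ n)"
proof -
  let ?Max = "{M. maximal_subgroup G M}"
  have "finite M" if "M \<in> ?Max" for M
    using that fin subgroup.subset[OF maximal_subgroupD(1)] finite_subset by blast
  then have "finite (\<Union>M\<in>?Max. {..<n} \<rightarrow>\<^sub>E M)"
    using finite_maximal_subgroups[OF fin] by (simp add: finite_PiE)
  then have "card {f \<in> {..<n} \<rightarrow>\<^sub>E carrier G. generate G (f ` {..<n}) \<noteq> carrier G}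
      \<le> card (\<Union>M\<in>?Max. {..<n} \<rightarrow>\<^sub>E M)"
    by (rule card_mono) (rule nongenerating_tuples_subset[OF fin])
  also have "\<dots> \<le> (\<Sum>M\<in>?Max. card ({..<n} \<rightarrow>\<^sub>E M))"
    by (rule card_UN_le[OF finite_maximal_subgroups[OF fin]])
  finally show ?thesis by (simp add: card_PiE)
qed

lemma one_minus_gen_prob_le:
  assumes fin: "finite (carrier G)"
  shows "1 - gen_prob G n \<le> (\<Sum>M\<in>{M. maximal_subgroup G M}. 1 / real (card (rcosets M)) ^ n)"
proof -
  let ?Max = "{M. maximal_subgroup G M}"
  have pos: "real (card (carrier G)) ^ n > 0" using fin one_closed by (auto simp: card_gt_0_iff)
  have "1 - gen_prob G n \<le> (\<Sum>M\<in>?Max. real (card M) ^ n) / real (card (carrier G)) ^ n"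
    unfolding one_minus_gen_prob_eq[OF fin]
    using card_nongenerating_tuples_le[OF fin, of n] pos
    by (intro divide_right_mono) (simp_all flip: of_nat_power of_nat_sum)
  also have "\<dots> = (\<Sum>M\<in>?Max. 1 / real (card (rcosets M)) ^ n)"
    unfolding sum_divide_distrib
  proof (rule sum.cong[OF refl])
    fix M assume "M \<in> ?Max"
    then have M: "subgroup M G" using maximal_subgroupD(1) by blast
    have "real (card (carrier G)) = real (card (rcosets M)) * real (card M)"
      using lagrange[OF M] by (simp add: Coset.order_def flip: of_nat_mult)
    moreover have "card M > 0" using subgroup.finite_imp_card_positive[OF M fin] .
    ultimately show "real (card M) ^ n / real (card (carrier G)) ^ n = 1 / real (card (rcosets M)) ^ n"
      by (simp add: power_divide[symmetric] power_one_over)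
  qed
  finally show ?thesis .
qed

lemma index_typeB_mem:
  assumes fin: "finite (carrier G)" and M: "typeB G M"
  shows "card (rcosets M) \<in> {5..card (carrier G)}"
proof -
  have max: "maximal_subgroup G M" and "\<not> abelian_socle (G Mod core G M)"
    using M unfolding typeB_def by auto
  then have "\<not> card (rcosets M) \<le> 4"
    using abelian_socle_quotient_core_if_index_le_4[OF fin maximal_subgroupD(1)[OF max]] by blast
  then show ?thesis using index_maximal_subgroup_bounds(2)[OF fin max] by simp
qed

lemma index_typeA_mem:
  assumes fin: "finite (carrier G)" and M: "typeA G M"
  shows "card (rcosets M) \<in> (\<lambda>(p, a). p ^ a) ` (prime_divisors_order G \<times> {1..card (carrier G)})"
proof -
  have max: "maximal_subgroup G M" and "abelian_socle (G Mod core G M)"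
    using M unfolding typeA_def by auto
  then obtain p a where pa: "Factorial_Ring.prime p" "0 < a" "card (rcosets M) = p ^ a"
    using index_prime_power_if_abelian_socle[OF fin] by blast
  have "card (rcosets M) dvd card (carrier G)"
    using lagrange[OF maximal_subgroupD(1)[OF max]] by (metis Coset.order_def dvd_triv_left)
  then have "p dvd card (carrier G)" using pa by (metis dvd_power dvd_trans)
  then have "p \<in> prime_divisors_order G" using pa(1) by (simp add: prime_divisors_order_def)
  moreover have "a \<le> card (carrier G)"
  proof -
    have "a < 2 ^ a" by (rule less_exp)
    also have "(2::nat) ^ a \<le> p ^ a" using pa(1) prime_ge_2_nat by (simp add: power_mono)
    also have "\<dots> \<le> card (carrier G)" using pa(3) index_maximal_subgroup_bounds(2)[OF fin max] by simp
    finally show ?thesis by simp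
  qed
  ultimately have "(p, a) \<in> prime_divisors_order G \<times> {1..card (carrier G)}" using pa(2) by simp
  then show ?thesis using pa(3) by force
qed

lemma sum_typeB_eq:
  assumes fin: "finite (carrier G)"
  shows "(\<Sum>M\<in>{M. typeB G M}. 1 / real (card (rcosets M)) ^ n)
    = (\<Sum>d\<in>{5..card (carrier G)}. real (mB G d) / real d ^ n)"
proof -
  have "finite {M. typeB G M}"
    using finite_maximal_subgroups[OF fin] by (rule finite_subset[rotated]) (auto simp: typeB_def)
  then have "(\<Sum>M\<in>{M. typeB G M}. 1 / real (card (rcosets M)) ^ n)
      = (\<Sum>d\<in>{5..card (carrier G)}. real (card {M \<in> {M. typeB G M}. card (rcosets M) = d}) * (1 / real d ^ n))"
    using index_typeB_mem[OF fin] by (intro sum_by_fibres) auto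
  also have "\<dots> = (\<Sum>d\<in>{5..card (carrier G)}. real (mB G d) / real d ^ n)"
    by (simp add: mB_def)
  finally show ?thesis .
qed

lemma sum_typeA_eq:
  assumes fin: "finite (carrier G)"
  shows "(\<Sum>M\<in>{M. typeA G M}. 1 / real (card (rcosets M)) ^ n)
    = (\<Sum>p\<in>prime_divisors_order G. \<Sum>a\<in>{1..card (carrier G)}. real (mA G (p ^ a)) / real p ^ (a * n))"
proof -
  let ?P = "prime_divisors_order G" and ?A = "{1..card (carrier G)}"
  let ?pow = "\<lambda>(p, a). p ^ a :: nat"
  have "card (carrier G) > 0" using fin one_closed by (auto simp: card_gt_0_iff)
  then have "?P \<subseteq> {..card (carrier G)}" by (auto simp: prime_divisors_order_def dvd_imp_le)
  then have fin_PA: "finite (?P \<times> ?A)" using finite_subset by blast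
  have inj: "inj_on ?pow (?P \<times> ?A)"
  proof (rule inj_onI)
    fix x y assume "x \<in> ?P \<times> ?A" "y \<in> ?P \<times> ?A" "?pow x = ?pow y"
    moreover obtain p a q b where "x = (p, a)" "y = (q, b)" by fastforce
    ultimately show "x = y"
      using prime_power_inj'[of p q a b] by (simp add: prime_divisors_order_def)
  qed
  have "finite {M. typeA G M}"
    using finite_maximal_subgroups[OF fin] by (rule finite_subset[rotated]) (auto simp: typeA_def)
  then have "(\<Sum>M\<in>{M. typeA G M}. 1 / real (card (rcosets M)) ^ n)
      = (\<Sum>d\<in>?pow ` (?P \<times> ?A). real (card {M \<in> {M. typeA G M}. card (rcosets M) = d}) * (1 / real d ^ n))"
    using index_typeA_mem[OF fin] fin_PA by (intro sum_by_fibres) auto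
  also have "\<dots> = (\<Sum>(p, a)\<in>?P \<times> ?A. real (mA G (p ^ a)) / real (p ^ a) ^ n)"
    unfolding sum.reindex[OF inj] by (simp add: case_prod_unfold mA_def)
  also have "\<dots> = (\<Sum>p\<in>?P. \<Sum>a\<in>?A. real (mA G (p ^ a)) / real p ^ (a * n))"
    by (simp add: sum.cartesian_product power_mult)
  finally show ?thesis .
qed

lemma sum_maximal_subgroups_eq:
  assumes fin: "finite (carrier G)"
  shows "(\<Sum>M\<in>{M. maximal_subgroup G M}. 1 / real (card (rcosets M)) ^ n)
    = (\<Sum>d\<in>{5..card (carrier G)}. real (mB G d) / real d ^ n)
      + (\<Sum>p\<in>prime_divisors_order G. \<Sum>a\<in>{1..card (carrier G)}. real (mA G (p ^ a)) / real p ^ (a * n))"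
proof -
  have split: "{M. maximal_subgroup G M} = {M. typeB G M} \<union> {M. typeA G M}"
    unfolding typeA_def typeB_def by blast
  have "finite {M. typeB G M}" "finite {M. typeA G M}"
    using finite_maximal_subgroups[OF fin] unfolding split by auto
  moreover have "{M. typeB G M} \<inter> {M. typeA G M} = {}" unfolding typeA_def typeB_def by blast
  ultimately show ?thesis
    unfolding split by (simp add: sum.union_disjoint sum_typeA_eq[OF fin] sum_typeB_eq[OF fin])
qed

lemma summable_one_minus_gen_prob:
  assumes fin: "finite (carrier G)"
  shows "summable (\<lambda>n. 1 - gen_prob G n)"
proof (rule summable_comparison_test)
  show "\<exists>N. \<forall>n\<ge>N. norm (1 - gen_prob G n) \<le> (\<Sum>M\<in>{M. maximal_subgroup G M}. (1 / real (card (rcosets M))) ^ n)"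
    using one_minus_gen_prob_bounds[OF fin] one_minus_gen_prob_le[OF fin] by (simp add: power_one_over)
  have "norm (1 / real (card (rcosets M))) < 1" if "maximal_subgroup G M" for M
    using index_maximal_subgroup_bounds(1)[OF fin that] by simp
  then show "summable (\<lambda>n. \<Sum>M\<in>{M. maximal_subgroup G M}. (1 / real (card (rcosets M))) ^ n)"
    by (intro summable_sum summable_geometric) blast
qed

lemma suminf_tail_one_minus_gen_prob_le:
  assumes fin: "finite (carrier G)"
  shows "suminf (\<lambda>k. 1 - gen_prob G (k + t))
    \<le> mu_star G t + (\<Sum>p\<in>prime_divisors_order G. mu_p G p t)"
proof -
  define B where "B k = (\<Sum>d\<in>{5..card (carrier G)}. real (mB G d) / real d ^ (k + t))" for k
  define A where "A p k = (\<Sum>a\<in>{1..card (carrier G)}. real (mA G (p ^ a)) / real p ^ (a * (k + t)))"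
    for p k
  have summable_A: "summable (A p)" if "p \<in> prime_divisors_order G" for p
    using that prime_gt_1_nat unfolding A_def prime_divisors_order_def
    by (intro summable_sum) (auto simp: power_mult intro!: summable_shifted_geometric one_less_power)
  have summable_B: "summable B"
    unfolding B_def by (intro summable_sum summable_shifted_geometric) auto
  have "suminf (\<lambda>k. 1 - gen_prob G (k + t)) \<le> suminf (\<lambda>k. B k + (\<Sum>p\<in>prime_divisors_order G. A p k))"
  proof (rule suminf_le)
    show "1 - gen_prob G (k + t) \<le> B k + (\<Sum>p\<in>prime_divisors_order G. A p k)" for k
      using one_minus_gen_prob_le[OF fin] sum_maximal_subgroups_eq[OF fin] unfolding A_def B_def by simp
    show "summable (\<lambda>k. 1 - gen_prob G (k + t))"
      by (rule summable_ignore_initial_segment[OF summable_one_minus_gen_prob[OF fin]])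
    show "summable (\<lambda>k. B k + (\<Sum>p\<in>prime_divisors_order G. A p k))"
      using summable_A summable_B by (intro summable_add summable_sum) auto
  qed
  also have "\<dots> = mu_star G t + (\<Sum>p\<in>prime_divisors_order G. mu_p G p t)"
    using summable_A summable_B unfolding mu_star_def mu_p_def A_def[symmetric] B_def[symmetric]
    by (simp add: suminf_add[symmetric] suminf_sum summable_sum)
  finally show ?thesis .
qed

end

theorem lemma2:
  fixes G :: "('a, 'b) monoid_scheme" and t :: nat
  assumes "group G" and "finite (carrier G)" and "0 < t"
  shows "expected_gen G \<le> real t + mu_star G t + (\<Sum>p\<in>prime_divisors_order G. mu_p G p t)"
proof -
  interpret group G by fact
  note fin = \<open>finite (carrier G)\<close>
  have "(\<Sum>n<t. 1 - gen_prob G n) \<le> real t"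
    using sum_mono[of "{..<t}" "\<lambda>n. 1 - gen_prob G n" "\<lambda>_. 1"] one_minus_gen_prob_bounds(2)[OF fin]
    by simp
  then show ?thesis
    using suminf_tail_one_minus_gen_prob_le[OF fin, of t]
    unfolding expected_gen_def suminf_split_initial_segment[OF summable_one_minus_gen_prob[OF fin], of t]
    by simp
qed

end
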